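(* For all $\mathfrak a,\mathfrak b\in\mathfrak D$ and $d\in\mathbb Z$, $S_{<d}(\mathfrak a\sqcup\!\sqcup\mathfrak b)=S_{<d}(\mathfrak a)S_{<d}(\mathfrak b)$ and $\zeta_A(\mathfrak a\sqcup\!\sqcup\mathfrak b)=\zeta_A(\mathfrak a)\zeta_A(\mathfrak b)$.
   Context: Let $q$ be a prime power, $A=\mathbb F_q[\theta]$, $A_+$ the set of monic polynomials in $A$, and $K_\infty=\mathbb F_q((1/\theta))$. Let $\Gamma=\{x_{n,\varepsilon}\}_{n\in\mathbb N,\varepsilon\in\mathbb F_q^*}$, $\langle\Gamma\rangle$ the set of words over $\Gamma$ (empty word $1$, juxtaposition = concatenation) and $\mathfrak D$ the $\mathbb F_q$-vector space with basis $\langle\Gamma\rangle$; write $x_n:=x_{n,1}$. For positive integers $r,s,j$ put $\Delta^j_{r,s}=(-1)^{r-1}\binom{j-1}{r-1}+(-1)^{s-1}\binom{j-1}{s-1}$ if $(q-1)\mid j$ and $0$ otherwise. The bilinear products $\diamond,\sqcup\!\sqcup$ on $\mathfrak D$ are defined recursively by $1\diamond\mathfrak a=\mathfrak a\diamond1=\mathfrak a$, $1\sqcup\!\sqcup\mathfrak a=\mathfrak a\sqcup\!\sqcup1=\mathfrak a$ and, for nonempty $\mathfrak a=x_{a,\alpha}\mathfrak a_-$, $\mathfrak b=x_{b,\beta}\mathfrak b_-$: $\mathfrak a\diamond\mathfrak b=x_{a+b,\alpha\beta}(\mathfrak a_-\sqcup\!\sqcup\mathfrak b_-)+\sum_{i+j=a+b}\Delta^j_{a,b}x_{i,\alpha\beta}(x_j\sqcup\!\sqcup(\mathfrak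 a_-\sqcup\!\sqcup\mathfrak b_-))$ and $\mathfrak a\sqcup\!\sqcup\mathfrak b=x_{a,\alpha}(\mathfrak a_-\sqcup\!\sqcup\mathfrak b)+x_{b,\beta}(\mathfrak a\sqcup\!\sqcup\mathfrak b_-)+\mathfrak a\diamond\mathfrak b$ ($i,j$ positive integers). For $d\in\mathbb Z$, $S_{<d},\zeta_A:\mathfrak D\to K_\infty$ are the $\mathbb F_q$-linear maps sending $1$ to $1$ and a word $x_{s_1,\varepsilon_1}\cdots x_{s_r,\varepsilon_r}$ to $S_{<d}=\sum \frac{\varepsilon_1^{\deg a_1}\cdots\varepsilon_r^{\deg a_r}}{a_1^{s_1}\cdots a_r^{s_r}}$ over $a_i\in A_+$ with $d>\deg a_1>\cdots>\deg a_r\ge0$, respectively $\zeta_A=$ the same sum over $a_i\in A_+$ with $\deg a_1>\cdots>\deg a_r\ge0$ (alternating multiple zeta values). *)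

theory Defs
  imports "HOL-Computational_Algebra.Polynomial" "HOL-Computational_Algebra.Formal_Laurent_Series"
begin

(* The base field F_q is a finite field type 'a :: {field, finite}; q = CARD('a).
   A letter x_{n,eps} is the pair (n, eps) with n >= 1 and eps <> 0.
   A word is a list of letters (head = leftmost letter). *)

type_synonym 'a letter = "nat \<times> 'a"
type_synonym 'a word = "'a letter list"

definition valid_letter :: "('a::zero) letter \<Rightarrow> bool" where
  "valid_letter l \<longleftrightarrow> fst l \<ge> 1 \<and> snd l \<noteq> 0"

definition valid_word :: "('a::zero) word \<Rightarrow> bool" where
  "valid_word w \<longleftrightarrow> (\<forall>l\<in>set w. valid_letter l)"

(* Elements of the F_q-vector space D with basis the words: finitely supported
   coefficient functions on words, supported on valid words. *)
definition in_D :: "('a::field word \<Rightarrow> 'a) \<Rightarrow> bool" where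
  "in_D f \<longleftrightarrow> finite {w. f w \<noteq> 0} \<and> (\<forall>w. f w \<noteq> 0 \<longrightarrow> valid_word w)"

definition wvec :: "'a word \<Rightarrow> ('a word \<Rightarrow> 'a::field)" where
  "wvec u = (\<lambda>w. if w = u then 1 else 0)"

(* left concatenation with a letter, extended linearly: f |-> l f *)
definition prefix_lin :: "'a letter \<Rightarrow> ('a word \<Rightarrow> 'a::field) \<Rightarrow> ('a word \<Rightarrow> 'a)" where
  "prefix_lin l f = (\<lambda>w. case w of [] \<Rightarrow> 0 | l' # w' \<Rightarrow> (if l' = l then f w' else 0))"

definition lin_ext :: "('a word \<Rightarrow> 'a word \<Rightarrow> ('a word \<Rightarrow> 'a::field))
     \<Rightarrow> ('a word \<Rightarrow> 'a) \<Rightarrow> ('a word \<Rightarrow> 'a) \<Rightarrow> ('a word \<Rightarrow> 'a)" where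
  "lin_ext m f g = (\<lambda>w. \<Sum>u\<in>{u. f u \<noteq> 0}. \<Sum>v\<in>{v. g v \<noteq> 0}. f u * g v * m u v w)"

definition Delta :: "nat \<Rightarrow> nat \<Rightarrow> nat \<Rightarrow> 'a::{field,finite}" where
  "Delta r s j = (if (card (UNIV :: 'a set) - 1) dvd j
      then (-1) ^ (r - 1) * of_nat ((j - 1) choose (r - 1))
         + (-1) ^ (s - 1) * of_nat ((j - 1) choose (s - 1))
      else 0)"

(* the diamond product of two nonempty words, given the shuffle product m
   (used on words of smaller total length) *)
fun dia_of :: "('a word \<Rightarrow> 'a word \<Rightarrow> ('a word \<Rightarrow> 'a::{field,finite}))
     \<Rightarrow> 'a word \<Rightarrow> 'a word \<Rightarrow> ('a word \<Rightarrow> 'a)" where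
  "dia_of m (x # a') (y # b') =
     (\<lambda>w. prefix_lin (fst x + fst y, snd x * snd y) (m a' b') w
        + (\<Sum>i\<in>{1..<fst x + fst y}.
             Delta (fst x) (fst y) (fst x + fst y - i)
             * prefix_lin (i, snd x * snd y)
                 (lin_ext m (wvec [(fst x + fst y - i, 1)]) (m a' b')) w))"
| "dia_of m a b = (\<lambda>w. 0)"

(* shuffle product on words, defined by the recursion of the paper; the first
   argument is fuel (recursion depth), which is always sufficient when it is at
   least the total length of the two words (see shuffle_word) *)
fun sh_fuel :: "nat \<Rightarrow> 'a word \<Rightarrow> 'a word \<Rightarrow> ('a word \<Rightarrow> 'a::{field,finite})" where
  "sh_fuel n [] v = wvec v"
| "sh_fuel n (x # a) [] = wvec (x # a)"
| "sh_fuel 0 (x # a) (y # b) = (\<lambda>w. 0)"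
| "sh_fuel (Suc n) (x # a) (y # b) =
     (\<lambda>w. prefix_lin x (sh_fuel n a (y # b)) w
        + prefix_lin y (sh_fuel n (x # a) b) w
        + dia_of (sh_fuel n) (x # a) (y # b) w)"

definition shuffle_word :: "'a word \<Rightarrow> 'a word \<Rightarrow> ('a word \<Rightarrow> 'a::{field,finite})" where
  "shuffle_word u v = sh_fuel (length u + length v) u v"

definition shuffle :: "('a word \<Rightarrow> 'a::{field,finite}) \<Rightarrow> ('a word \<Rightarrow> 'a) \<Rightarrow> ('a word \<Rightarrow> 'a)" where
  "shuffle f g = lin_ext shuffle_word f g"

(* K_infty = F_q((1/theta)) as Laurent series in X = 1/theta; theta = X^{-1} *)
definition theta :: "'a::field fls" where
  "theta = fls_X_inv"

definition embA :: "'a::field poly \<Rightarrow> 'a fls" where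
  "embA a = poly (map_poly fls_const a) theta"

definition tuples_lt :: "int \<Rightarrow> nat \<Rightarrow> 'a::field poly list set" where
  "tuples_lt d r = {as. length as = r \<and> (\<forall>i<r. lead_coeff (as ! i) = 1)
      \<and> (\<forall>i<r. int (degree (as ! i)) < d)
      \<and> (\<forall>i. Suc i < r \<longrightarrow> degree (as ! Suc i) < degree (as ! i))}"

definition S_word :: "int \<Rightarrow> 'a word \<Rightarrow> 'a::{field,finite} fls" where
  "S_word d w = (\<Sum>as\<in>tuples_lt d (length w).
      \<Prod>i<length w. fls_const (snd (w ! i) ^ degree (as ! i)) / (embA (as ! i)) ^ fst (w ! i))"

definition S_lt :: "int \<Rightarrow> ('a word \<Rightarrow> 'a::{field,finite}) \<Rightarrow> 'a fls" where
  "S_lt d f = (\<Sum>w\<in>{w. f w \<noteq> 0}. fls_const (f w) * S_word d w)"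

(* convergence in K_infty (the 1/theta-adic topology): for every N the coefficients
   of index < N eventually agree with those of the limit *)
definition fls_tendsto :: "(int \<Rightarrow> 'a::zero fls) \<Rightarrow> 'a fls \<Rightarrow> bool" where
  "fls_tendsto F L \<longleftrightarrow> (\<forall>N::int. eventually (\<lambda>d. \<forall>n<N. fls_nth (F d) n = fls_nth L n) at_top)"

(* zeta_A(w) = the (infinite) sum over deg a_1 > ... > deg a_r >= 0,
   i.e. the limit in K_infty of the partial sums S_{<d}(w) as d -> infinity *)
definition zeta_word :: "'a word \<Rightarrow> 'a::{field,finite} fls" where
  "zeta_word w = (THE L. fls_tendsto (\<lambda>d. S_word d w) L)"

definition zeta_A :: "('a word \<Rightarrow> 'a::{field,finite}) \<Rightarrow> 'a fls" where
  "zeta_A f = (\<Sum>w\<in>{w. f w \<noteq> 0}. fls_const (f w) * zeta_word w)"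

end

(*
  S_{<d} is multiplicative by induction on d. Splitting off the top degree gives
  S_{<k+1}(x w) = S_{<k}(x w) + S_k(x) S_{<k}(w), with S_k(x_{n,e}) = e^k * sum of a^{-n}
  over the monic a of degree k. Expanding S_{<k+1} of a shuffle in the same way, everything
  matches the product S_{<k+1}(x a) S_{<k+1}(y b) except that S_k(x) S_k(y) is replaced by
  the diamond terms. These agree by Chen's partial fraction formula for 1/(a^r b^s), summed
  over distinct monic a, b of degree k: a - b runs over the nonzero polynomials of degree < k,
  and the power sums over those are -S_{<k}(x_j) if (q - 1) | j and 0 otherwise.
  The identity for zeta_A follows in the limit d -> oo in the 1/theta-adic topology: the
  increments S_{<k+1}(w) - S_{<k}(w) have valuation >= k and all S_{<d}(w) are integral.
*)
theory Submission
  imports Defs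
begin

unbundle fps_syntax

section \<open>Power sums over a finite field\<close>

lemma card_UNIV_field_ge_2: "card (UNIV :: 'a::{field,finite} set) \<ge> 2"
proof -
  have "card {0::'a, 1} \<le> card (UNIV :: 'a set)" by (intro card_mono) auto
  then show ?thesis by simp
qed

lemma of_nat_card_UNIV_field: "(of_nat (card (UNIV :: 'a::{field,finite} set)) :: 'a) = 0"
proof -
  have "(\<Sum>x\<in>(UNIV :: 'a set). x + 1) = (\<Sum>x\<in>UNIV. x)"
    by (rule sum.reindex_bij_witness[of _ "\<lambda>x. x - 1" "\<lambda>x. x + 1"]) auto
  then show ?thesis by (simp add: sum.distrib)
qed

lemma field_power_card_minus_1:
  fixes e :: "'a::{field,finite}"
  assumes "e \<noteq> 0"
  shows "e ^ (card (UNIV :: 'a set) - 1) = 1"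
proof -
  let ?U = "UNIV - {0::'a}"
  have "(\<Prod>x\<in>?U. e * x) = (\<Prod>x\<in>?U. x)"
    by (rule prod.reindex_bij_witness[of _ "\<lambda>x. x / e" "\<lambda>x. e * x"]) (use assms in auto)
  moreover have "(\<Prod>x\<in>?U. e * x) = e ^ card ?U * (\<Prod>x\<in>?U. x)"
    by (simp add: prod.distrib)
  moreover have "(\<Prod>x\<in>?U. x) \<noteq> 0" by simp
  moreover have "card ?U = card (UNIV :: 'a set) - 1" by (simp add: card_Diff_singleton)
  ultimately show ?thesis by simp
qed

lemma field_power_eq_1_if_dvd:
  fixes e :: "'a::{field,finite}"
  assumes "e \<noteq> 0" "(card (UNIV :: 'a set) - 1) dvd j"
  shows "e ^ j = 1"
  using assms(2) field_power_card_minus_1[OF assms(1)] by (auto simp: power_mult)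

lemma ex_field_power_neq_1:
  assumes "\<not> (card (UNIV :: 'a::{field,finite} set) - 1) dvd j"
  shows "\<exists>g::'a. g \<noteq> 0 \<and> g ^ j \<noteq> 1"
proof (rule ccontr)
  define m where "m = card (UNIV :: 'a set) - 1"
  define j' where "j' = j mod m"
  assume "\<not> ?thesis"
  then have "x ^ j' = 1" if "x \<noteq> 0" for x :: 'a
    using that field_power_card_minus_1[OF that]
    by (metis div_mult_mod_eq j'_def m_def mult.commute power_add power_mult power_one mult_1)
  then have roots: "UNIV - {0} \<subseteq> {x. poly (monom 1 j' + [:-1:]) x = (0::'a)}"
    by (auto simp: poly_monom)
  have "j' > 0" "j' < m"
    using assms card_UNIV_field_ge_2[where 'a='a] by (auto simp: j'_def m_def dvd_eq_mod_eq_0 gr0I)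
  have deg: "degree (monom (1::'a) j' + [:-1:]) = j'"
    using \<open>j' > 0\<close> by (auto simp: degree_add_eq_left degree_monom_eq)
  then have "monom (1::'a) j' + [:-1:] \<noteq> 0" using \<open>j' > 0\<close> by auto
  then have "card (UNIV - {0::'a}) \<le> j'"
    using roots deg by (metis card_poly_roots_bound card_mono finite le_trans)
  with \<open>j' < m\<close> show False by (simp add: card_Diff_singleton m_def)
qed

lemma sum_nonzero_powers:
  "(\<Sum>e\<in>UNIV - {0::'a::{field,finite}}. e ^ j) = (if (card (UNIV :: 'a set) - 1) dvd j then -1 else 0)"
proof (cases "(card (UNIV :: 'a set) - 1) dvd j")
  case True
  then have "(\<Sum>e\<in>UNIV - {0::'a}. e ^ j) = of_nat (card (UNIV :: 'a set) - 1)"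
    by (simp add: field_power_eq_1_if_dvd card_Diff_singleton)
  also have "\<dots> = -1"
    using of_nat_card_UNIV_field[where 'a='a] card_UNIV_field_ge_2[where 'a='a] by (simp add: of_nat_diff)
  finally show ?thesis using True by simp
next
  case False
  obtain g :: 'a where g: "g \<noteq> 0" "g ^ j \<noteq> 1" using ex_field_power_neq_1[OF False] by auto
  let ?S = "\<Sum>e\<in>UNIV - {0::'a}. e ^ j"
  have "(\<Sum>e\<in>UNIV - {0::'a}. (g * e) ^ j) = ?S"
    by (rule sum.reindex_bij_witness[of _ "\<lambda>x. x / g" "\<lambda>x. g * x"]) (use g in auto)
  then have "g ^ j * ?S = ?S" by (simp add: power_mult_distrib sum_distrib_left mult.commute)
  then have "(g ^ j - 1) * ?S = 0" by (simp add: algebra_simps)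
  then show ?thesis using g False by simp
qed

section \<open>Chen's partial fraction identity\<close>

definition chen_term :: "'a::field \<Rightarrow> 'a \<Rightarrow> 'a \<Rightarrow> nat \<Rightarrow> nat \<Rightarrow> nat \<Rightarrow> 'a" where
  "chen_term u v w r s j = w ^ Suc j * ((-1) ^ Suc s * of_nat (j choose s) * u ^ (Suc (r + s) - j)
      + (-1) ^ (r + j) * of_nat (j choose r) * v ^ (Suc (r + s) - j))"

lemma chen_term_Suc_Suc:
  "chen_term u v w (Suc r) (Suc s) 0 = 0"
  "chen_term u v w (Suc r) (Suc s) (Suc j) = w * chen_term u v w r (Suc s) j - w * chen_term u v w (Suc r) s j"
proof -
  show "chen_term u v w (Suc r) (Suc s) 0 = 0" by (simp add: chen_term_def)
  have "Suc (r + Suc s) - j = Suc (Suc r + Suc s) - Suc j" "Suc (Suc r + s) - j = Suc (Suc r + Suc s) - Suc j"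
    by simp_all
  then show "chen_term u v w (Suc r) (Suc s) (Suc j) = w * chen_term u v w r (Suc s) j - w * chen_term u v w (Suc r) s j"
    unfolding chen_term_def binomial_Suc_Suc by (simp add: algebra_simps)
qed

lemma chen_term_0_Suc:
  "chen_term u v w 0 (Suc s) 0 = w * v ^ Suc (Suc s)"
  "j < Suc s \<Longrightarrow> chen_term u v w 0 (Suc s) (Suc j) = - (w * chen_term u v w 0 s j)"
  by (auto simp: chen_term_def algebra_simps binomial_eq_0 Suc_diff_le)

lemma chen_term_Suc_0:
  "chen_term u v w (Suc r) 0 0 = - (w * u ^ Suc (Suc r))"
  "j < Suc r \<Longrightarrow> chen_term u v w (Suc r) 0 (Suc j) = w * chen_term u v w r 0 j"
  by (auto simp: chen_term_def algebra_simps binomial_eq_0 Suc_diff_le)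

text \<open>Chen's partial fraction decomposition: with \<open>u = 1/a\<close>, \<open>v = 1/b\<close> and \<open>w = 1/(a - b)\<close>
  it expands \<open>1/(a\<^sup>r\<^sup>+\<^sup>1 b\<^sup>s\<^sup>+\<^sup>1)\<close> into terms \<open>1/(a\<^sup>i (a - b)\<^sup>j)\<close> and \<open>1/(b\<^sup>i (a - b)\<^sup>j)\<close>.\<close>
theorem chen_partial_fractions:
  fixes u v w :: "'a::field"
  assumes uv: "u * v = w * (v - u)"
  shows "u ^ Suc r * v ^ Suc s = (\<Sum>j<Suc (r + s). chen_term u v w r s j)"
proof (induction "r + s" arbitrary: r s rule: less_induct)
  case less
  consider "r = 0" "s = 0" | s' where "r = 0" "s = Suc s'" | r' where "r = Suc r'" "s = 0"
    | r' s' where "r = Suc r'" "s = Suc s'"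
    by (cases r; cases s) auto
  then show ?case
  proof cases
    case 1
    then show ?thesis using uv by (simp add: chen_term_def algebra_simps)
  next
    case (2 s')
    have "u ^ Suc r * v ^ Suc s = v ^ Suc s' * (u * v)"
      using 2 by simp
    also have "\<dots> = w * v ^ Suc s - w * (u ^ Suc 0 * v ^ Suc s')"
      unfolding uv using 2 by (simp add: algebra_simps)
    also have "\<dots> = chen_term u v w r s 0 + (\<Sum>j<s. chen_term u v w r s (Suc j))"
      using less[of 0 s'] 2 by (simp add: chen_term_0_Suc sum_distrib_left sum_negf del: sum.lessThan_Suc)
    finally show ?thesis using 2 by (simp add: sum.lessThan_Suc_shift del: sum.lessThan_Suc)
  next
    case (3 r')
    have "u ^ Suc r * v ^ Suc s = u ^ Suc r' * (u * v)"
      using 3 by simp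
    also have "\<dots> = w * (u ^ Suc r' * v ^ Suc 0) - w * u ^ Suc r"
      unfolding uv using 3 by (simp add: algebra_simps)
    also have "\<dots> = chen_term u v w r s 0 + (\<Sum>j<r. chen_term u v w r s (Suc j))"
      using less[of r' 0] 3 by (simp add: chen_term_Suc_0 sum_distrib_left del: sum.lessThan_Suc)
    finally show ?thesis using 3 by (simp add: sum.lessThan_Suc_shift del: sum.lessThan_Suc)
  next
    case (4 r' s')
    have "u ^ Suc r * v ^ Suc s = u ^ Suc r' * v ^ Suc s' * (u * v)"
      using 4 by (simp add: algebra_simps)
    also have "\<dots> = w * (u ^ Suc r' * v ^ Suc s) - w * (u ^ Suc r * v ^ Suc s')"
      unfolding uv using 4 by (simp add: algebra_simps)
    also have "\<dots> = (\<Sum>j<r + s. w * chen_term u v w r' s j - w * chen_term u v w r s' j)"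
      using less[of r' s] less[of r s'] 4 by (simp add: sum_distrib_left sum_subtractf del: sum.lessThan_Suc)
    also have "\<dots> = (\<Sum>j<r + s. chen_term u v w r s (Suc j))"
      using 4 by (simp add: chen_term_Suc_Suc del: sum.lessThan_Suc)
    finally show ?thesis using 4 by (simp add: chen_term_Suc_Suc sum.lessThan_Suc_shift del: sum.lessThan_Suc)
  qed
qed

section \<open>Laurent series in 1/\<theta>\<close>

lemma fls_const_add: "fls_const (a + b) = fls_const a + fls_const (b :: 'a::ring_1)"
  by (rule fls_eqI) simp

lemma fls_const_diff: "fls_const (a - b) = fls_const a - fls_const (b :: 'a::ring_1)"
  by (rule fls_eqI) simp

lemma fls_const_sum: "fls_const (\<Sum>x\<in>A. f x) = (\<Sum>x\<in>A. fls_const (f x :: 'a::ring_1))"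
  by (induction A rule: infinite_finite_induct) (auto simp: fls_const_add)

lemma embA_nth: "embA a $$ n = (if n \<le> 0 then coeff a (nat (- n)) else 0)"
proof (induction a arbitrary: n rule: pCons_induct)
  case 0
  then show ?case by (simp add: embA_def)
next
  case (pCons c p)
  have "embA (pCons c p) = fls_const c + fls_shift 1 (embA p)"
    by (simp add: embA_def map_poly_pCons theta_def fls_X_inv_times_conv_shift)
  moreover have "n < 0 \<Longrightarrow> nat (- n) = Suc (nat (- (n + 1)))" by simp
  ultimately show ?case by (cases "n < 0") (simp_all add: pCons.IH)
qed

lemma embA_diff: "embA (a - b) = embA a - embA b"
  by (rule fls_eqI) (simp add: embA_nth)

lemma embA_smult: "embA (smult e a) = fls_const e * embA a"
  by (rule fls_eqI) (simp add: embA_nth)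

lemma embA_nonzero: "a \<noteq> 0 \<Longrightarrow> embA a \<noteq> 0"
  by (rule fls_nonzeroI[of _ "- int (degree a)"]) (simp add: embA_nth)

lemma fls_subdegree_embA: "a \<noteq> 0 \<Longrightarrow> fls_subdegree (embA a) = - int (degree a)"
  by (rule fls_subdegree_eqI) (auto simp: embA_nth coeff_eq_0)

text \<open>\<open>fls_vanishes_below m F\<close> says that the \<open>1/\<theta>\<close>-adic valuation of \<open>F\<close> is at least \<open>m\<close>.\<close>
definition fls_vanishes_below :: "int \<Rightarrow> 'a::zero fls \<Rightarrow> bool" where
  "fls_vanishes_below m F \<longleftrightarrow> (\<forall>n<m. F $$ n = 0)"

lemma fls_vanishes_below_0 [simp]: "fls_vanishes_below m 0"
  and fls_vanishes_below_const: "fls_vanishes_below 0 (fls_const c)"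
  by (simp_all add: fls_vanishes_below_def)

lemma fls_vanishes_below_add:
  "fls_vanishes_below m F \<Longrightarrow> fls_vanishes_below m G \<Longrightarrow> fls_vanishes_below m (F + G)"
  by (simp add: fls_vanishes_below_def)

lemma fls_vanishes_below_mono:
  "fls_vanishes_below m F \<Longrightarrow> m' \<le> m \<Longrightarrow> fls_vanishes_below m' F"
  by (simp add: fls_vanishes_below_def)

lemma fls_vanishes_below_sum:
  "(\<And>x. x \<in> A \<Longrightarrow> fls_vanishes_below m (f x)) \<Longrightarrow> fls_vanishes_below m (\<Sum>x\<in>A. f x)"
  by (simp add: fls_vanishes_below_def fls_nth_sum)

lemma fls_vanishes_below_mult:
  fixes F G :: "'a::field fls"
  assumes "fls_vanishes_below m F" "fls_vanishes_below m' G"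
  shows "fls_vanishes_below (m + m') (F * G)"
proof (cases "F = 0 \<or> G = 0")
  case False
  then have "m \<le> fls_subdegree F" "m' \<le> fls_subdegree G"
    using assms by (auto simp: fls_vanishes_below_def intro: fls_subdegree_geI)
  then show ?thesis by (auto simp: fls_vanishes_below_def intro: fls_times_nth_eq0)
qed auto

lemma fls_vanishes_below_prod:
  fixes f :: "'b \<Rightarrow> 'a::field fls"
  shows "(\<And>x. x \<in> A \<Longrightarrow> fls_vanishes_below 0 (f x)) \<Longrightarrow> fls_vanishes_below 0 (\<Prod>x\<in>A. f x)"
proof (induction A rule: infinite_finite_induct)
  case (insert x F)
  then show ?case using fls_vanishes_below_mult[of 0 "f x" 0] by simp
qed (simp_all add: fls_vanishes_below_def)

lemma fls_vanishes_below_const_div_embA_power: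
  fixes a :: "'a::field poly"
  assumes "a \<noteq> 0"
  shows "fls_vanishes_below (int (degree a * s)) (fls_const c / embA a ^ s)"
proof (cases "c = 0")
  case False
  then have "fls_subdegree (fls_const c / embA a ^ s) = int (degree a * s)"
    using assms embA_nonzero[OF assms]
    by (simp add: divide_inverse fls_subdegree_pow fls_subdegree_embA)
  then show ?thesis by (simp add: fls_vanishes_below_def)
qed (simp add: fls_vanishes_below_def)

section \<open>Power sums over monic polynomials\<close>

lemma finite_polys_degree_le: "finite {p :: 'a::{zero,finite} poly. degree p \<le> k}"
proof (rule finite_subset)
  show "{p :: 'a poly. degree p \<le> k} \<subseteq> Poly ` {xs. set xs \<subseteq> UNIV \<and> length xs \<le> Suc k}"
  proof
    fix p :: "'a poly" assume "p \<in> {p. degree p \<le> k}"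
    then have "length (coeffs p) \<le> Suc k" by (cases "p = 0") (auto simp: length_coeffs)
    then show "p \<in> Poly ` {xs. set xs \<subseteq> UNIV \<and> length xs \<le> Suc k}"
      by (intro image_eqI[of _ _ "coeffs p"]) auto
  qed
  show "finite (Poly ` {xs :: 'a list. set xs \<subseteq> UNIV \<and> length xs \<le> Suc k})"
    by (intro finite_imageI finite_lists_length_le) simp
qed

definition monics :: "nat \<Rightarrow> 'a::comm_ring_1 poly set" where
  "monics k = {a. lead_coeff a = 1 \<and> degree a = k}"

definition monics_below :: "nat \<Rightarrow> 'a::comm_ring_1 poly set" where
  "monics_below k = {a. lead_coeff a = 1 \<and> degree a < k}"

definition nonzero_below :: "nat \<Rightarrow> 'a::comm_ring_1 poly set" where
  "nonzero_below k = {c. c \<noteq> 0 \<and> degree c < k}"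

lemma finite_monics: "finite (monics k :: 'a::{comm_ring_1,finite} poly set)"
  and finite_monics_below: "finite (monics_below k :: 'a::{comm_ring_1,finite} poly set)"
  unfolding monics_def monics_below_def
  by (auto intro: finite_subset[OF _ finite_polys_degree_le[of k]])

lemma monics_nonzero: "a \<in> monics k \<Longrightarrow> a \<noteq> 0"
  by (auto simp: monics_def)

lemma monics_below_Suc: "monics_below (Suc k) = monics_below k \<union> monics k"
  and monics_below_Int_monics: "monics_below k \<inter> monics k = {}"
  by (auto simp: monics_below_def monics_def)

lemma diff_in_nonzero_below:
  fixes a b :: "'a::comm_ring_1 poly"
  assumes "a \<in> monics k" "b \<in> monics k" "a \<noteq> b"
  shows "a - b \<in> nonzero_below k"
proof -
  have "degree (a - b) \<le> k" "coeff (a - b) k = 0"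
    using assms by (auto simp: monics_def intro: degree_diff_le)
  moreover have "a - b \<noteq> 0" using assms by simp
  ultimately have "degree (a - b) < k" by (metis le_neq_implies_less leading_coeff_0_iff)
  then show ?thesis using \<open>a - b \<noteq> 0\<close> by (simp add: nonzero_below_def)
qed

lemma add_in_monics:
  fixes a c :: "'a::comm_ring_1 poly"
  assumes "a \<in> monics k" "c \<in> nonzero_below k"
  shows "a + c \<in> monics k"
proof -
  have "degree c < degree a" using assms by (simp add: monics_def nonzero_below_def)
  then show ?thesis
    using assms by (auto simp: monics_def degree_add_eq_left coeff_eq_0)
qed

lemma sum_monics_diff:
  fixes f :: "'a::comm_ring_1 poly \<Rightarrow> 'b::comm_monoid_add"
  assumes a: "a \<in> monics k"
  shows "(\<Sum>b\<in>monics k - {a}. f (a - b)) = (\<Sum>c\<in>nonzero_below k. f c)"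
    and "(\<Sum>b\<in>monics k - {a}. f (b - a)) = (\<Sum>c\<in>nonzero_below k. f c)"
proof -
  have nz: "c \<noteq> 0" "- c \<in> nonzero_below k" if "c \<in> nonzero_below k" for c :: "'a poly"
    using that by (simp_all add: nonzero_below_def)
  have diff: "a - b \<in> nonzero_below k" "b - a \<in> nonzero_below k" if "b \<in> monics k - {a}" for b
    using that a by (auto intro: diff_in_nonzero_below)
  have "a - c \<in> monics k" if "c \<in> nonzero_below k" for c
    using add_in_monics[OF a nz(2)[OF that]] by simp
  then show "(\<Sum>b\<in>monics k - {a}. f (a - b)) = (\<Sum>c\<in>nonzero_below k. f c)"
    by (intro sum.reindex_bij_witness[of _ "\<lambda>c. a - c" "\<lambda>b. a - b"]) (auto dest: nz intro: diff)
  show "(\<Sum>b\<in>monics k - {a}. f (b - a)) = (\<Sum>c\<in>nonzero_below k. f c)"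
    using add_in_monics[OF a]
    by (intro sum.reindex_bij_witness[of _ "\<lambda>c. a + c" "\<lambda>b. b - a"]) (auto dest: nz intro: diff)
qed

lemma sum_product_off_diagonal:
  fixes f g :: "'b \<Rightarrow> 'a::comm_semiring_0"
  assumes "finite M"
  shows "(\<Sum>a\<in>M. f a) * (\<Sum>b\<in>M. g b) = (\<Sum>a\<in>M. f a * g a) + (\<Sum>a\<in>M. \<Sum>b\<in>M - {a}. f a * g b)"
  using assms by (simp add: sum_product sum.distrib[symmetric] sum.remove)

lemma sum_off_diagonal_swap:
  assumes "finite M"
  shows "(\<Sum>a\<in>M. \<Sum>b\<in>M - {a}. h a b) = (\<Sum>b\<in>M. \<Sum>a\<in>M - {b}. h a b)"
proof -
  have "M - {x} = {y\<in>M. x \<noteq> y}" "M - {x} = {y\<in>M. y \<noteq> x}" for x by auto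
  then show ?thesis using sum.swap_restrict[OF assms assms, of h "\<lambda>a b. a \<noteq> b"] by simp
qed

definition monic_power_sum :: "nat \<Rightarrow> nat \<Rightarrow> 'a::field fls" where
  "monic_power_sum k s = (\<Sum>a\<in>monics k. 1 / embA a ^ s)"

definition monic_power_sum_below :: "nat \<Rightarrow> nat \<Rightarrow> 'a::field fls" where
  "monic_power_sum_below k s = (\<Sum>a\<in>monics_below k. 1 / embA a ^ s)"

definition nonzero_power_sum :: "nat \<Rightarrow> nat \<Rightarrow> 'a::field fls" where
  "nonzero_power_sum k s = (\<Sum>c\<in>nonzero_below k. 1 / embA c ^ s)"

text \<open>Every nonzero polynomial of degree \<open>< k\<close> is uniquely \<open>e m\<close> with \<open>e \<noteq> 0\<close> a constant and \<open>m\<close> monic.\<close>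
lemma nonzero_power_sum_eq:
  "nonzero_power_sum k j =
     fls_const (if (card (UNIV :: 'a set) - 1) dvd j then -1 else 0) * (monic_power_sum_below k j :: 'a::{field,finite} fls)"
proof -
  have "nonzero_power_sum k j = (\<Sum>(e, m)\<in>(UNIV - {0::'a}) \<times> monics_below k. 1 / embA (smult e m) ^ j)"
    unfolding nonzero_power_sum_def
    by (rule sum.reindex_bij_witness[of _ "\<lambda>(e, m). smult e m" "\<lambda>c. (lead_coeff c, smult (inverse (lead_coeff c)) c)"])
       (auto simp: nonzero_below_def monics_below_def lead_coeff_smult)
  also have "\<dots> = (\<Sum>e\<in>UNIV - {0::'a}. fls_const (inverse e ^ j) * monic_power_sum_below k j)"
    unfolding sum.cartesian_product[symmetric] monic_power_sum_below_def sum_distrib_left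
    by (intro sum.cong refl) (simp add: embA_smult power_mult_distrib fls_const_power divide_inverse
        fls_inverse_const power_inverse[symmetric])
  also have "\<dots> = fls_const (\<Sum>e\<in>UNIV - {0::'a}. inverse e ^ j) * monic_power_sum_below k j"
    by (simp add: fls_const_sum sum_distrib_right)
  also have "(\<Sum>e\<in>UNIV - {0::'a}. inverse e ^ j) = (\<Sum>e\<in>UNIV - {0::'a}. e ^ j)"
    by (rule sum.reindex_bij_witness[of _ inverse inverse]) auto
  finally show ?thesis by (simp add: sum_nonzero_powers)
qed

lemma sum_off_diagonal_monics:
  "(\<Sum>a\<in>monics k. \<Sum>b\<in>monics k - {a}. (1 / embA a) ^ n * (1 / embA (a - b)) ^ m)
     = monic_power_sum k n * (nonzero_power_sum k m :: 'a::{field,finite} fls)"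
  "(\<Sum>a\<in>monics k. \<Sum>b\<in>monics k - {a}. (1 / embA b) ^ n * (1 / embA (a - b)) ^ m)
     = monic_power_sum k n * (nonzero_power_sum k m :: 'a::{field,finite} fls)"
proof -
  have Q: "monic_power_sum k n = (\<Sum>a\<in>monics k. (1 / embA a) ^ n :: 'a fls)"
    and N: "nonzero_power_sum k m = (\<Sum>c\<in>nonzero_below k. (1 / embA c) ^ m :: 'a fls)"
    by (simp_all add: monic_power_sum_def nonzero_power_sum_def power_one_over)
  show "(\<Sum>a\<in>monics k. \<Sum>b\<in>monics k - {a}. (1 / embA a) ^ n * (1 / embA (a - b)) ^ m)
     = monic_power_sum k n * (nonzero_power_sum k m :: 'a fls)"
    unfolding Q N sum_distrib_right sum_distrib_left[symmetric]
    by (intro sum.cong refl) (simp add: sum_monics_diff(1)[where f = "\<lambda>c. (1 / embA c) ^ m"])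
  show "(\<Sum>a\<in>monics k. \<Sum>b\<in>monics k - {a}. (1 / embA b) ^ n * (1 / embA (a - b)) ^ m)
     = monic_power_sum k n * (nonzero_power_sum k m :: 'a fls)"
    unfolding sum_off_diagonal_swap[OF finite_monics] Q N sum_distrib_right sum_distrib_left[symmetric]
    by (intro sum.cong refl) (simp add: sum_monics_diff(2)[where f = "\<lambda>c. (1 / embA c) ^ m"])
qed

lemma monic_power_sum_mult_partial_fractions:
  "monic_power_sum k (Suc r) * monic_power_sum k (Suc s) =
     (monic_power_sum k (Suc r + Suc s) :: 'a::{field,finite} fls) +
     (\<Sum>j<Suc (r + s). ((-1) ^ Suc s * of_nat (j choose s) + (-1) ^ (r + j) * of_nat (j choose r))
        * monic_power_sum k (Suc (r + s) - j) * nonzero_power_sum k (Suc j))"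
proof -
  define M where "M = (monics k :: 'a poly set)"
  define u where "u a = 1 / embA a" for a :: "'a poly"
  define w where "w a b = 1 / embA (a - b)" for a b :: "'a poly"
  define \<alpha> where "\<alpha> j = ((-1) ^ Suc s * of_nat (j choose s) :: 'a fls)" for j
  define \<beta> where "\<beta> j = ((-1) ^ (r + j) * of_nat (j choose r) :: 'a fls)" for j
  define e where "e j = Suc (r + s) - j" for j
  have M: "finite M" by (simp add: M_def finite_monics)
  have Q: "monic_power_sum k n = (\<Sum>a\<in>M. u a ^ n)" for n
    by (simp add: monic_power_sum_def M_def u_def power_one_over)
  have pf: "u a ^ Suc r * u b ^ Suc s
      = (\<Sum>j<Suc (r + s). \<alpha> j * (u a ^ e j * w a b ^ Suc j) + \<beta> j * (u b ^ e j * w a b ^ Suc j))"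
    if "a \<in> M" "b \<in> M - {a}" for a b
  proof -
    have "embA a \<noteq> 0" "embA b \<noteq> 0" "embA a - embA b \<noteq> 0"
      using that by (auto simp: M_def embA_diff[symmetric] intro!: embA_nonzero dest: monics_nonzero)
    then have "u a * u b = w a b * (u b - u a)"
      by (simp add: u_def w_def embA_diff field_simps)
    from chen_partial_fractions[OF this] show ?thesis
      by (simp add: chen_term_def \<alpha>_def \<beta>_def e_def algebra_simps)
  qed
  have diag: "(\<Sum>a\<in>M. \<Sum>b\<in>M - {a}. u a ^ n * w a b ^ m) = monic_power_sum k n * nonzero_power_sum k m"
    "(\<Sum>a\<in>M. \<Sum>b\<in>M - {a}. u b ^ n * w a b ^ m) = monic_power_sum k n * nonzero_power_sum k m" for n m
    unfolding M_def u_def w_def by (rule sum_off_diagonal_monics)+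
  have "monic_power_sum k (Suc r) * monic_power_sum k (Suc s)
      = monic_power_sum k (Suc r + Suc s) + (\<Sum>a\<in>M. \<Sum>b\<in>M - {a}. u a ^ Suc r * u b ^ Suc s)"
    unfolding Q sum_product_off_diagonal[OF M] by (simp add: power_add mult_ac)
  also have "(\<Sum>a\<in>M. \<Sum>b\<in>M - {a}. u a ^ Suc r * u b ^ Suc s)
      = (\<Sum>a\<in>M. \<Sum>b\<in>M - {a}. \<Sum>j<Suc (r + s).
           \<alpha> j * (u a ^ e j * w a b ^ Suc j) + \<beta> j * (u b ^ e j * w a b ^ Suc j))"
    by (rule sum.cong[OF refl], rule sum.cong[OF refl], rule pf) auto
  also have "\<dots> = (\<Sum>j<Suc (r + s). \<Sum>a\<in>M. \<Sum>b\<in>M - {a}.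
           \<alpha> j * (u a ^ e j * w a b ^ Suc j) + \<beta> j * (u b ^ e j * w a b ^ Suc j))"
    by (subst sum.swap, rule sum.cong[OF refl], rule sum.swap)
  also have "\<dots> = (\<Sum>j<Suc (r + s). \<alpha> j * (\<Sum>a\<in>M. \<Sum>b\<in>M - {a}. u a ^ e j * w a b ^ Suc j)
                        + \<beta> j * (\<Sum>a\<in>M. \<Sum>b\<in>M - {a}. u b ^ e j * w a b ^ Suc j))"
    by (simp only: sum.distrib sum_distrib_left)
  also have "\<dots> = (\<Sum>j<Suc (r + s). (\<alpha> j + \<beta> j) * monic_power_sum k (e j) * nonzero_power_sum k (Suc j))"
    unfolding diag by (simp add: distrib_right mult.assoc)
  finally show ?thesis unfolding \<alpha>_def \<beta>_def e_def .
qed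

lemma Delta_Suc_Suc_Suc:
  "((-1) ^ Suc s * of_nat (j choose s) + (-1) ^ (r + j) * of_nat (j choose r))
      * (if (card (UNIV :: 'a set) - 1) dvd Suc j then -1 else 0)
    = (Delta (Suc r) (Suc s) (Suc j) :: 'a::{field,finite})"
proof (cases "(card (UNIV :: 'a set) - 1) dvd Suc j")
  case True
  then have "(-1 :: 'a) ^ Suc j = 1" by (intro field_power_eq_1_if_dvd) auto
  then have "(-1 :: 'a) ^ j = -1" by (simp add: minus_equation_iff)
  with True show ?thesis by (simp add: Delta_def power_add algebra_simps)
qed (simp add: Delta_def)

lemma monic_power_sum_mult:
  assumes "r \<ge> 1" "s \<ge> 1"
  shows "monic_power_sum k r * monic_power_sum k s = (monic_power_sum k (r + s) :: 'a::{field,finite} fls)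
     + (\<Sum>i\<in>{1..<r + s}. fls_const (Delta r s (r + s - i)) * monic_power_sum k i * monic_power_sum_below k (r + s - i))"
proof -
  obtain r' s' where rs: "r = Suc r'" "s = Suc s'"
    using assms by (metis Suc_pred' less_eq_Suc_le One_nat_def)
  have coeff: "((-1) ^ Suc s' * of_nat (j choose s') + (-1) ^ (r' + j) * of_nat (j choose r') :: 'a fls)
      * fls_const (if (card (UNIV :: 'a set) - 1) dvd Suc j then -1 else 0) = fls_const (Delta r s (Suc j))" for j
    unfolding rs Delta_Suc_Suc_Suc[symmetric]
    by (simp add: fls_const_add fls_const_diff fls_const_mult_const[symmetric] fls_const_power fls_of_nat
        del: fls_const_mult_const)
  have "monic_power_sum k r * monic_power_sum k s = (monic_power_sum k (r + s) :: 'a fls) + (\<Sum>j<Suc (r' + s').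
      fls_const (Delta r s (Suc j)) * monic_power_sum k (Suc (r' + s') - j) * monic_power_sum_below k (Suc j))"
    unfolding coeff[symmetric] unfolding rs monic_power_sum_mult_partial_fractions nonzero_power_sum_eq
    by (simp add: mult_ac)
  also have "(\<Sum>j<Suc (r' + s'). fls_const (Delta r s (Suc j)) * monic_power_sum k (Suc (r' + s') - j) * monic_power_sum_below k (Suc j))
     = (\<Sum>i\<in>{1..<r + s}. fls_const (Delta r s (r + s - i)) * monic_power_sum k i * monic_power_sum_below k (r + s - i))"
    by (rule sum.reindex_bij_witness[of _ "\<lambda>i. Suc (r' + s') - i" "\<lambda>j. Suc (r' + s') - j"])
       (auto simp: rs Suc_diff_le)
  finally show ?thesis .
qed

section \<open>The recursion for \<open>S_word\<close>\<close>

lemma tuples_lt_sorted_wrt: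
  "tuples_lt d r = {as. length as = r \<and> (\<forall>a\<in>set as. lead_coeff a = 1 \<and> int (degree a) < d)
      \<and> sorted_wrt (\<lambda>a b. degree b < degree a) as}"
proof -
  have "transp (\<lambda>a b :: 'a poly. degree b < degree a)" by (auto intro: transpI)
  then show ?thesis
    by (auto simp: tuples_lt_def sorted_wrt_iff_nth_Suc_transp all_set_conv_all_nth)
qed

lemma Cons_in_tuples_lt:
  "a # as \<in> tuples_lt d (Suc r) \<longleftrightarrow> a \<in> monics_below (nat d) \<and> as \<in> tuples_lt (int (degree a)) r"
  by (auto simp: tuples_lt_sorted_wrt monics_below_def)

lemma tuples_lt_0: "tuples_lt d 0 = {[]}"
  by (auto simp: tuples_lt_def)

lemma tuples_lt_Suc:
  "tuples_lt d (Suc r) = (\<lambda>(a, as). a # as) ` (SIGMA a:monics_below (nat d). tuples_lt (int (degree a)) r)"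
proof -
  have "bs \<in> tuples_lt d (Suc r) \<Longrightarrow> \<exists>a as. bs = a # as" for bs
    by (cases bs) (auto simp: tuples_lt_def)
  then show ?thesis by (fastforce simp: Cons_in_tuples_lt)
qed

lemma finite_tuples_lt: "finite (tuples_lt d r :: 'a::{field,finite} poly list set)"
proof (rule finite_subset)
  show "tuples_lt d r \<subseteq> {as. set as \<subseteq> {p :: 'a poly. degree p \<le> nat d} \<and> length as = r}"
    by (auto simp: tuples_lt_sorted_wrt)
  show "finite {as. set as \<subseteq> {p :: 'a poly. degree p \<le> nat d} \<and> length as = r}"
    by (intro finite_lists_length_eq finite_polys_degree_le)
qed

lemma S_word_Nil [simp]: "S_word d [] = 1"
  by (simp add: S_word_def tuples_lt_0)

lemma S_word_Cons:
  "S_word d (x # w) = (\<Sum>a\<in>monics_below (nat d).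
      fls_const (snd x ^ degree a) / embA a ^ fst x * S_word (int (degree a)) w)"
proof -
  define t where "t ws bs = (\<Prod>i<length ws. fls_const (snd (ws ! i) ^ degree (bs ! i)) / embA (bs ! i) ^ fst (ws ! i))"
    for ws :: "'a letter list" and bs :: "'a poly list"
  have inj: "inj_on (\<lambda>(a, as). a # as) (SIGMA a:monics_below (nat d). tuples_lt (int (degree a)) (length w))"
    by (auto simp: inj_on_def)
  have "S_word d (x # w) = (\<Sum>bs\<in>tuples_lt d (Suc (length w)). t (x # w) bs)"
    by (simp add: S_word_def t_def)
  also have "\<dots> = (\<Sum>(a, as)\<in>(SIGMA a:monics_below (nat d). tuples_lt (int (degree a)) (length w)). t (x # w) (a # as))"
    unfolding tuples_lt_Suc sum.reindex[OF inj] by (simp add: case_prod_beta comp_def)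
  also have "\<dots> = (\<Sum>a\<in>monics_below (nat d). \<Sum>as\<in>tuples_lt (int (degree a)) (length w). t (x # w) (a # as))"
    by (simp add: sum.Sigma finite_monics_below finite_tuples_lt)
  also have "\<dots> = (\<Sum>a\<in>monics_below (nat d).
      fls_const (snd x ^ degree a) / embA a ^ fst x * S_word (int (degree a)) w)"
    by (simp add: t_def S_word_def sum_distrib_left prod.lessThan_Suc_shift del: prod.lessThan_Suc)
  finally show ?thesis .
qed

lemma S_word_Cons_nonpos: "d \<le> 0 \<Longrightarrow> S_word d (x # w) = 0"
  by (simp add: S_word_Cons monics_below_def)

lemma S_word_single: "S_word d [(j, 1)] = monic_power_sum_below (nat d) j"
  by (simp add: S_word_Cons monic_power_sum_below_def)

definition S_deg :: "nat \<Rightarrow> 'a letter \<Rightarrow> 'a::field fls" where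
  "S_deg k x = fls_const (snd x ^ k) * monic_power_sum k (fst x)"

lemma S_word_Cons_Suc:
  "S_word (int (Suc k)) (x # w) = S_word (int k) (x # w) + S_deg k x * (S_word (int k) w :: 'a::{field,finite} fls)"
proof -
  have "S_deg k x * S_word (int k) w =
      (\<Sum>a\<in>monics k. fls_const (snd x ^ degree a) / embA a ^ fst x * S_word (int (degree a)) w)"
    by (simp add: S_deg_def monic_power_sum_def sum_distrib_left sum_distrib_right monics_def)
  then show ?thesis
    unfolding S_word_Cons nat_int monics_below_Suc
    by (simp add: sum.union_disjoint finite_monics finite_monics_below monics_below_Int_monics)
qed

lemma S_deg_mult:
  assumes "fst x \<ge> 1" "fst y \<ge> 1"
  shows "S_deg k x * S_deg k y = (S_deg k (fst x + fst y, snd x * snd y) :: 'a::{field,finite} fls)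
    + (\<Sum>i\<in>{1..<fst x + fst y}. fls_const (Delta (fst x) (fst y) (fst x + fst y - i))
        * S_deg k (i, snd x * snd y) * S_word (int k) [(fst x + fst y - i, 1)])"
proof -
  have "S_deg k x * S_deg k y = fls_const ((snd x * snd y) ^ k) * (monic_power_sum k (fst x) * monic_power_sum k (fst y))"
    by (simp add: S_deg_def power_mult_distrib mult_ac)
  also have "\<dots> = S_deg k (fst x + fst y, snd x * snd y)
     + (\<Sum>i\<in>{1..<fst x + fst y}. fls_const (Delta (fst x) (fst y) (fst x + fst y - i))
        * (fls_const ((snd x * snd y) ^ k) * monic_power_sum k i) * monic_power_sum_below k (fst x + fst y - i))"
    unfolding monic_power_sum_mult[OF assms] S_deg_def
    by (simp add: distrib_left sum_distrib_left mult_ac del: fls_const_mult_const)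
  finally show ?thesis by (simp add: S_deg_def S_word_single)
qed

section \<open>The shuffle product of words\<close>

abbreviation supp :: "('b \<Rightarrow> 'a::zero) \<Rightarrow> 'b set" where
  "supp f \<equiv> {x. f x \<noteq> 0}"

lemma lin_ext_nonzeroD:
  assumes "lin_ext m f g w \<noteq> 0"
  shows "\<exists>u v. f u \<noteq> 0 \<and> g v \<noteq> 0 \<and> m u v w \<noteq> 0"
proof -
  from assms obtain u where "u \<in> supp f" "(\<Sum>v\<in>supp g. f u * g v * m u v w) \<noteq> 0"
    unfolding lin_ext_def by (meson sum.not_neutral_contains_not_neutral)
  moreover from this obtain v where "v \<in> supp g" "f u * g v * m u v w \<noteq> 0"
    by (meson sum.not_neutral_contains_not_neutral)
  ultimately show ?thesis by auto
qed

lemma prefix_lin_nonzeroD: "prefix_lin l f w \<noteq> 0 \<Longrightarrow> \<exists>w'. w = l # w' \<and> f w' \<noteq> 0"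
  by (cases w) (auto simp: prefix_lin_def split: if_splits)

lemma wvec_nonzeroD: "wvec u w \<noteq> 0 \<Longrightarrow> w = u"
  by (simp add: wvec_def split: if_splits)

lemma supp_wvec: "supp (wvec u) = {u}"
  by (auto simp: wvec_def)

lemma finite_supp_prefix_lin: "finite (supp f) \<Longrightarrow> finite (supp (prefix_lin l f))"
  by (rule finite_subset[of _ "(\<lambda>w. l # w) ` supp f"]) (auto dest!: prefix_lin_nonzeroD)

lemma finite_supp_lin_ext:
  "finite (supp f) \<Longrightarrow> finite (supp g) \<Longrightarrow> (\<And>u v. finite (supp (m u v))) \<Longrightarrow> finite (supp (lin_ext m f g))"
  by (rule finite_subset[of _ "\<Union>u\<in>supp f. \<Union>v\<in>supp g. supp (m u v)"]) (auto dest!: lin_ext_nonzeroD)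

lemma finite_supp_add:
  "finite (supp f) \<Longrightarrow> finite (supp g) \<Longrightarrow> finite (supp (\<lambda>w. f w + g w :: 'a::comm_monoid_add))"
  by (rule finite_subset[of _ "supp f \<union> supp g"]) auto

lemma finite_supp_sum:
  "finite I \<Longrightarrow> (\<And>i. i \<in> I \<Longrightarrow> finite (supp (f i))) \<Longrightarrow> finite (supp (\<lambda>w. \<Sum>i\<in>I. f i w :: 'a::comm_monoid_add))"
  by (rule finite_subset[of _ "\<Union>i\<in>I. supp (f i)"]) (auto dest: sum.not_neutral_contains_not_neutral)

lemma finite_supp_mult_left: "finite (supp f) \<Longrightarrow> finite (supp (\<lambda>w. c * f w :: 'a::mult_zero))"
  by (rule finite_subset[of _ "supp f"]) auto

lemma valid_word_Nil [simp]: "valid_word []"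
  and valid_word_Cons [simp]: "valid_word (l # w) \<longleftrightarrow> 1 \<le> fst l \<and> snd l \<noteq> 0 \<and> valid_word w"
  by (auto simp: valid_word_def valid_letter_def)

lemma sh_fuel_nonzeroD:
  "sh_fuel n u v w \<noteq> 0 \<Longrightarrow> length w \<le> length u + length v \<and> (valid_word u \<longrightarrow> valid_word v \<longrightarrow> valid_word w)"
proof (induction n u v arbitrary: w rule: sh_fuel.induct)
  case (4 n x a y b)
  let ?xy = "(fst x + fst y, snd x * snd y)"
  let ?G = "\<lambda>i. lin_ext (sh_fuel n) (wvec [(fst x + fst y - i, 1)]) (sh_fuel n a b)"
  from "4.prems" consider
      "prefix_lin x (sh_fuel n a (y # b)) w \<noteq> 0"
    | "prefix_lin y (sh_fuel n (x # a) b) w \<noteq> 0"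
    | "prefix_lin ?xy (sh_fuel n a b) w \<noteq> 0"
    | i where "i \<in> {1..<fst x + fst y}" "prefix_lin (i, snd x * snd y) (?G i) w \<noteq> 0"
    by (fastforce dest: sum.not_neutral_contains_not_neutral)
  then show ?case
  proof cases
    case 4
    then obtain w' v0 where "w = (i, snd x * snd y) # w'" "sh_fuel n a b v0 \<noteq> 0"
      "sh_fuel n [(fst x + fst y - i, 1)] v0 w' \<noteq> 0"
      by (auto dest!: prefix_lin_nonzeroD lin_ext_nonzeroD wvec_nonzeroD)
    with 4 show ?thesis using "4.IH"(3)[of a b v0] "4.IH"(3)[of "[(fst x + fst y - i, 1)]" v0 w'] by auto
  qed (use "4.IH" in \<open>fastforce dest!: prefix_lin_nonzeroD\<close>)+
qed (auto dest: wvec_nonzeroD)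

lemma finite_supp_sh_fuel: "finite (supp (sh_fuel n u v))"
  by (induction n u v rule: sh_fuel.induct)
     (simp_all add: supp_wvec finite_supp_add finite_supp_prefix_lin finite_supp_sum
       finite_supp_mult_left finite_supp_lin_ext)

lemma lin_ext_cong:
  "(\<And>u v. f u \<noteq> 0 \<Longrightarrow> g v \<noteq> 0 \<Longrightarrow> m u v = m' u v) \<Longrightarrow> lin_ext m f g = lin_ext m' f g"
  unfolding lin_ext_def by (intro ext sum.cong refl) auto

lemma sh_fuel_eq:
  fixes u v :: "'a::{field,finite} word"
  shows "length u + length v \<le> n \<Longrightarrow> length u + length v \<le> n' \<Longrightarrow> sh_fuel n u v = sh_fuel n' u v"
proof (induction "length u + length v" arbitrary: u v n n' rule: less_induct)
  case less
  show ?case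
  proof (cases "u = [] \<or> v = []")
    case False
    then obtain x a y b where uv: "u = x # a" "v = y # b" by (auto simp: neq_Nil_conv)
    with less.prems obtain m m' where n: "n = Suc m" "n' = Suc m'" by (cases n; cases n') auto
    have IH: "length a' + length b' < length u + length v \<Longrightarrow> sh_fuel m a' b' = sh_fuel m' a' b'" for a' b' :: "'a word"
      using less.prems n by (intro less.hyps) auto
    have "lin_ext (sh_fuel m) (wvec [(j, 1)]) (sh_fuel m' a b) = lin_ext (sh_fuel m') (wvec [(j, 1)]) (sh_fuel m' a b)" for j
      using uv by (intro lin_ext_cong IH) (auto dest!: wvec_nonzeroD sh_fuel_nonzeroD)
    with uv n IH show ?thesis by simp
  qed (cases u; auto)
qed

lemma shuffle_word_Nil_left [simp]: "shuffle_word [] v = wvec v"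
  by (simp add: shuffle_word_def)

lemma shuffle_word_Nil_right [simp]: "shuffle_word u [] = wvec u"
  by (cases u) (simp_all add: shuffle_word_def)

lemma shuffle_word_nonzeroD:
  "shuffle_word u v w \<noteq> 0 \<Longrightarrow> length w \<le> length u + length v \<and> (valid_word u \<longrightarrow> valid_word v \<longrightarrow> valid_word w)"
  unfolding shuffle_word_def by (rule sh_fuel_nonzeroD)

lemma finite_supp_shuffle_word: "finite (supp (shuffle_word u v))"
  unfolding shuffle_word_def by (rule finite_supp_sh_fuel)

lemma shuffle_word_Cons_Cons:
  "shuffle_word (x # a) (y # b) = (\<lambda>w. prefix_lin x (shuffle_word a (y # b)) w
     + prefix_lin y (shuffle_word (x # a) b) w
     + prefix_lin (fst x + fst y, snd x * snd y) (shuffle_word a b) w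
     + (\<Sum>i\<in>{1..<fst x + fst y}. Delta (fst x) (fst y) (fst x + fst y - i)
         * prefix_lin (i, snd x * snd y) (lin_ext shuffle_word (wvec [(fst x + fst y - i, 1)]) (shuffle_word a b)) w))"
proof -
  have fuel: "length u + length v \<le> Suc (length a + length b) \<Longrightarrow>
      sh_fuel (Suc (length a + length b)) u v = shuffle_word u v" for u v :: "'a word"
    unfolding shuffle_word_def by (rule sh_fuel_eq) auto
  have "lin_ext (sh_fuel (Suc (length a + length b))) (wvec [(j, 1)]) (shuffle_word a b)
      = lin_ext shuffle_word (wvec [(j, 1)]) (shuffle_word a b)" for j
    by (intro lin_ext_cong fuel) (auto dest!: wvec_nonzeroD shuffle_word_nonzeroD)
  moreover have "shuffle_word (x # a) (y # b) = sh_fuel (Suc (Suc (length a + length b))) (x # a) (y # b)"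
    by (simp add: shuffle_word_def)
  ultimately show ?thesis by (simp add: fuel add.assoc)
qed

section \<open>Multiplicativity of \<open>S_lt\<close>\<close>

lemma S_lt_eq_sum_superset:
  assumes "finite W" "supp f \<subseteq> W"
  shows "S_lt d f = (\<Sum>w\<in>W. fls_const (f w) * S_word d w)"
  unfolding S_lt_def using assms by (intro sum.mono_neutral_left) auto

lemma S_lt_add:
  assumes "finite (supp f)" "finite (supp g)"
  shows "S_lt d (\<lambda>w. f w + g w) = S_lt d f + S_lt d g"
proof -
  have "S_lt d (\<lambda>w. f w + g w) = (\<Sum>w\<in>supp f \<union> supp g. fls_const (f w + g w) * S_word d w)"
    using assms by (intro S_lt_eq_sum_superset) auto
  also have "\<dots> = S_lt d f + S_lt d g"
    using assms by (simp add: S_lt_eq_sum_superset[of "supp f \<union> supp g"] fls_const_add distrib_right sum.distrib)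
  finally show ?thesis .
qed

lemma S_lt_mult_left:
  assumes "finite (supp f)"
  shows "S_lt d (\<lambda>w. c * f w) = fls_const c * S_lt d f"
proof -
  have "S_lt d (\<lambda>w. c * f w) = (\<Sum>w\<in>supp f. fls_const (c * f w) * S_word d w)"
    using assms by (intro S_lt_eq_sum_superset) auto
  also have "\<dots> = fls_const c * S_lt d f"
    using assms by (simp add: S_lt_eq_sum_superset[of "supp f" f] sum_distrib_left mult.assoc[symmetric])
  finally show ?thesis .
qed

lemma S_lt_sum:
  assumes "finite I" "\<And>i. i \<in> I \<Longrightarrow> finite (supp (f i))"
  shows "S_lt d (\<lambda>w. \<Sum>i\<in>I. f i w) = (\<Sum>i\<in>I. S_lt d (f i))"
  using assms
proof (induction I rule: finite_induct)
  case empty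
  then show ?case by (simp add: S_lt_def)
next
  case (insert i I)
  then show ?case by (simp add: S_lt_add finite_supp_sum)
qed

lemma S_lt_wvec [simp]: "S_lt d (wvec u) = S_word d u"
  by (simp add: S_lt_def supp_wvec) (simp add: wvec_def)

lemma S_lt_prefix_lin:
  assumes "finite (supp f)"
  shows "S_lt d (prefix_lin l f) = (\<Sum>w\<in>supp f. fls_const (f w) * S_word d (l # w))"
proof -
  have "S_lt d (prefix_lin l f) = (\<Sum>w\<in>(\<lambda>w. l # w) ` supp f. fls_const (prefix_lin l f w) * S_word d w)"
    using assms by (intro S_lt_eq_sum_superset) (auto dest!: prefix_lin_nonzeroD)
  also have "\<dots> = (\<Sum>w\<in>supp f. fls_const (f w) * S_word d (l # w))"
    by (subst sum.reindex) (auto simp: inj_on_def prefix_lin_def)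
  finally show ?thesis .
qed

lemma S_lt_prefix_lin_Suc:
  assumes "finite (supp f)"
  shows "S_lt (int (Suc k)) (prefix_lin l f) = S_lt (int k) (prefix_lin l f) + S_deg k l * S_lt (int k) f"
  unfolding S_lt_prefix_lin[OF assms] S_word_Cons_Suc S_lt_def[of "int k" f]
  by (simp add: distrib_left sum.distrib sum_distrib_left algebra_simps)

lemma S_lt_lin_ext:
  assumes "finite (supp f)" "finite (supp g)" "\<And>u v. finite (supp (m u v))"
  shows "S_lt d (lin_ext m f g) = (\<Sum>u\<in>supp f. \<Sum>v\<in>supp g. fls_const (f u * g v) * S_lt d (m u v))"
  using assms unfolding lin_ext_def
  by (simp add: S_lt_sum S_lt_mult_left finite_supp_sum finite_supp_mult_left)

lemma S_lt_nonpos: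
  assumes "d \<le> 0" "finite (supp f)"
  shows "S_lt d f = fls_const (f [])"
proof -
  have nil: "S_word d w = 0" if "w \<noteq> []" for w
    using assms(1) that by (auto simp: neq_Nil_conv S_word_Cons_nonpos)
  have "S_lt d f = (\<Sum>w\<in>insert [] (supp f). fls_const (f w) * S_word d w)"
    using assms by (intro S_lt_eq_sum_superset) auto
  then show ?thesis
    using assms by (simp add: sum.insert_remove) (auto intro!: sum.neutral simp: nil)
qed

lemma shuffle_word_Nil_value: "shuffle_word u v [] = (if u = [] \<and> v = [] then 1 else 0)"
  by (cases u; cases v) (auto simp: wvec_def shuffle_word_Cons_Cons prefix_lin_def)

lemma S_lt_shuffle_word_nonpos:
  "d \<le> 0 \<Longrightarrow> S_lt d (shuffle_word u v) = S_word d u * S_word d v"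
  by (cases u; cases v)
     (simp_all add: S_lt_nonpos finite_supp_shuffle_word shuffle_word_Nil_value S_word_Cons_nonpos)

lemma S_lt_lin_ext_shuffle_word:
  assumes "finite (supp f)" "finite (supp g)"
    and mult: "\<And>u v. u \<in> supp f \<Longrightarrow> v \<in> supp g \<Longrightarrow> S_lt d (shuffle_word u v) = S_word d u * S_word d v"
  shows "S_lt d (lin_ext shuffle_word f g) = S_lt d f * S_lt d g"
proof -
  have "S_lt d (lin_ext shuffle_word f g)
      = (\<Sum>u\<in>supp f. \<Sum>v\<in>supp g. (fls_const (f u) * S_word d u) * (fls_const (g v) * S_word d v))"
    using assms by (simp add: S_lt_lin_ext finite_supp_shuffle_word mult mult_ac)
  also have "\<dots> = S_lt d f * S_lt d g"
    by (simp add: S_lt_def sum_product)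
  finally show ?thesis .
qed

lemma S_lt_shuffle_word_Cons_Cons:
  "S_lt d (shuffle_word (x # a) (y # b)) =
       S_lt d (prefix_lin x (shuffle_word a (y # b)))
     + S_lt d (prefix_lin y (shuffle_word (x # a) b))
     + S_lt d (prefix_lin (fst x + fst y, snd x * snd y) (shuffle_word a b))
     + (\<Sum>i\<in>{1..<fst x + fst y}. fls_const (Delta (fst x) (fst y) (fst x + fst y - i))
         * S_lt d (prefix_lin (i, snd x * snd y) (lin_ext shuffle_word (wvec [(fst x + fst y - i, 1)]) (shuffle_word a b))))"
  unfolding shuffle_word_Cons_Cons
  by (simp add: S_lt_add S_lt_sum S_lt_mult_left finite_supp_add finite_supp_sum finite_supp_mult_left
      finite_supp_prefix_lin finite_supp_lin_ext finite_supp_shuffle_word supp_wvec)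

lemma S_lt_Suc_shuffle_word_Cons_Cons:
  fixes x y :: "'a::{field,finite} letter" and a b :: "'a word"
  defines "z \<equiv> (fst x + fst y, snd x * snd y)"
    and "G i \<equiv> lin_ext shuffle_word (wvec [(fst x + fst y - i, 1)]) (shuffle_word a b)"
  shows "S_lt (int (Suc k)) (shuffle_word (x # a) (y # b)) =
       S_lt (int k) (shuffle_word (x # a) (y # b))
     + S_deg k x * S_lt (int k) (shuffle_word a (y # b))
     + S_deg k y * S_lt (int k) (shuffle_word (x # a) b)
     + S_deg k z * S_lt (int k) (shuffle_word a b)
     + (\<Sum>i\<in>{1..<fst x + fst y}. fls_const (Delta (fst x) (fst y) (fst x + fst y - i))
         * S_deg k (i, snd x * snd y) * S_lt (int k) (G i))"
proof -
  have "finite (supp (G i))" for i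
    by (simp add: G_def finite_supp_lin_ext finite_supp_shuffle_word supp_wvec)
  then show ?thesis
    unfolding S_lt_shuffle_word_Cons_Cons[where d = "int (Suc k)"] S_lt_shuffle_word_Cons_Cons[where d = "int k"]
    by (simp add: S_lt_prefix_lin_Suc finite_supp_shuffle_word z_def G_def[symmetric]
        algebra_simps sum.distrib sum_distrib_left del: of_nat_Suc)
qed

lemma S_lt_shuffle_word_Suc:
  fixes u v :: "'a::{field,finite} word"
  assumes IH: "\<And>u v :: 'a word. valid_word u \<Longrightarrow> valid_word v \<Longrightarrow>
      S_lt (int k) (shuffle_word u v) = S_word (int k) u * S_word (int k) v"
    and "valid_word u" "valid_word v"
  shows "S_lt (int (Suc k)) (shuffle_word u v) = S_word (int (Suc k)) u * S_word (int (Suc k)) v"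
proof (cases u; cases v)
  fix x a y b assume uv: "u = x # a" "v = y # b"
  let ?S = "\<lambda>w. S_word (int k) w"
  let ?\<epsilon> = "snd x * snd y"
  have valid: "fst x \<ge> 1" "fst y \<ge> 1" "valid_word a" "valid_word b" "valid_word (x # a)" "valid_word (y # b)"
    using assms uv by auto
  have "S_lt (int k) (lin_ext shuffle_word (wvec [(fst x + fst y - i, 1)]) (shuffle_word a b))
      = ?S [(fst x + fst y - i, 1)] * (?S a * ?S b)" if "i \<in> {1..<fst x + fst y}" for i
  proof -
    have "S_lt (int k) (lin_ext shuffle_word (wvec [(fst x + fst y - i, 1)]) (shuffle_word a b))
        = ?S [(fst x + fst y - i, 1)] * S_lt (int k) (shuffle_word a b)"
      using that valid
      by (subst S_lt_lin_ext_shuffle_word) (auto simp: finite_supp_shuffle_word supp_wvec IH dest!: shuffle_word_nonzeroD)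
    then show ?thesis using valid by (simp add: IH)
  qed
  then have "S_lt (int (Suc k)) (shuffle_word u v) = ?S u * ?S v
      + S_deg k x * (?S a * ?S v) + S_deg k y * (?S u * ?S b)
      + (S_deg k (fst x + fst y, ?\<epsilon>) + (\<Sum>i\<in>{1..<fst x + fst y}.
          fls_const (Delta (fst x) (fst y) (fst x + fst y - i)) * S_deg k (i, ?\<epsilon>) * ?S [(fst x + fst y - i, 1)]))
        * (?S a * ?S b)"
    unfolding uv S_lt_Suc_shuffle_word_Cons_Cons using valid
    by (simp add: IH sum_distrib_left sum_distrib_right algebra_simps del: of_nat_Suc valid_word_Cons)
  also have "\<dots> = (?S u + S_deg k x * ?S a) * (?S v + S_deg k y * ?S b)"
    unfolding S_deg_mult[OF valid(1,2), symmetric] by (simp add: algebra_simps)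
  finally show ?thesis by (simp only: uv S_word_Cons_Suc)
qed simp_all

lemma S_lt_shuffle_word:
  fixes u v :: "'a::{field,finite} word"
  assumes "valid_word u" "valid_word v"
  shows "S_lt d (shuffle_word u v) = S_word d u * S_word d v"
proof (cases "d \<le> 0")
  case False
  have "\<forall>u v :: 'a word. valid_word u \<longrightarrow> valid_word v \<longrightarrow>
      S_lt (int k) (shuffle_word u v) = S_word (int k) u * S_word (int k) v" for k
    by (induction k) (simp_all add: S_lt_shuffle_word_nonpos S_lt_shuffle_word_Suc del: of_nat_Suc)
  with assms False show ?thesis by (metis nonneg_int_cases not_le order_less_imp_le)
qed (rule S_lt_shuffle_word_nonpos)

lemma S_lt_shuffle:
  assumes "in_D a" "in_D b"
  shows "S_lt d (shuffle a b) = S_lt d a * S_lt d b"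
  using assms unfolding shuffle_def in_D_def
  by (intro S_lt_lin_ext_shuffle_word S_lt_shuffle_word) auto

section \<open>Passage to the limit\<close>

lemma fls_tendsto_iff: "fls_tendsto F L \<longleftrightarrow> (\<forall>N. eventually (\<lambda>d. fls_vanishes_below N (F d - L)) at_top)"
  by (simp add: fls_tendsto_def fls_vanishes_below_def)

lemma fls_tendsto_unique:
  assumes "fls_tendsto F L" "fls_tendsto F M"
  shows "L = M"
proof (rule fls_eqI)
  fix n
  have "eventually (\<lambda>d. \<forall>k<n + 1. F d $$ k = L $$ k) at_top" "eventually (\<lambda>d. \<forall>k<n + 1. F d $$ k = M $$ k) at_top"
    using assms unfolding fls_tendsto_def by blast+
  from eventually_conj[OF this] obtain d0 :: int
    where "\<forall>d\<ge>d0. (\<forall>k<n + 1. F d $$ k = L $$ k) \<and> (\<forall>k<n + 1. F d $$ k = M $$ k)"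
    by (auto simp: eventually_at_top_linorder)
  then show "L $$ n = M $$ n" by (metis less_add_one order_refl)
qed

lemma fls_tendsto_vanishes_below_0:
  assumes "fls_tendsto F L" "\<And>d. fls_vanishes_below 0 (F d)"
  shows "fls_vanishes_below 0 L"
proof -
  obtain d0 :: int where "\<forall>d\<ge>d0. \<forall>k<0. F d $$ k = L $$ k"
    using assms(1) unfolding fls_tendsto_def by (auto simp: eventually_at_top_linorder)
  then show ?thesis using assms(2)[of d0] by (auto simp: fls_vanishes_below_def)
qed

lemma fls_tendsto_const: "fls_tendsto (\<lambda>d. L) L"
  by (simp add: fls_tendsto_def)

lemma fls_tendsto_add:
  fixes F G :: "int \<Rightarrow> 'a::ab_group_add fls"
  assumes "fls_tendsto F L" "fls_tendsto G M"
  shows "fls_tendsto (\<lambda>d. F d + G d) (L + M)"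
  unfolding fls_tendsto_def
proof
  fix N
  have "eventually (\<lambda>d. (\<forall>n<N. F d $$ n = L $$ n) \<and> (\<forall>n<N. G d $$ n = M $$ n)) at_top"
    using assms unfolding fls_tendsto_def by (intro eventually_conj) auto
  then show "eventually (\<lambda>d. \<forall>n<N. (F d + G d) $$ n = (L + M) $$ n) at_top"
    by (rule eventually_mono) simp
qed

lemma fls_tendsto_sum:
  fixes F :: "'b \<Rightarrow> int \<Rightarrow> 'a::ab_group_add fls"
  assumes "finite I" "\<And>i. i \<in> I \<Longrightarrow> fls_tendsto (F i) (L i)"
  shows "fls_tendsto (\<lambda>d. \<Sum>i\<in>I. F i d) (\<Sum>i\<in>I. L i)"
  using assms by (induction I rule: finite_induct) (simp_all add: fls_tendsto_const fls_tendsto_add)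

lemma fls_tendsto_mult:
  fixes F G :: "int \<Rightarrow> 'a::field fls"
  assumes "fls_tendsto F L" "fls_tendsto G M"
    and "\<And>d. fls_vanishes_below 0 (G d)" "fls_vanishes_below 0 L"
  shows "fls_tendsto (\<lambda>d. F d * G d) (L * M)"
  unfolding fls_tendsto_iff
proof
  fix N
  have "eventually (\<lambda>d. fls_vanishes_below N (F d - L) \<and> fls_vanishes_below N (G d - M)) at_top"
    using assms unfolding fls_tendsto_iff by (intro eventually_conj) auto
  then show "eventually (\<lambda>d. fls_vanishes_below N (F d * G d - L * M)) at_top"
  proof (rule eventually_mono)
    fix d assume "fls_vanishes_below N (F d - L) \<and> fls_vanishes_below N (G d - M)"
    then have "fls_vanishes_below N ((F d - L) * G d)" "fls_vanishes_below N (L * (G d - M))"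
      using assms(3,4) fls_vanishes_below_mult[of N "F d - L" 0 "G d"] fls_vanishes_below_mult[of 0 L N "G d - M"]
      by auto
    then have "fls_vanishes_below N ((F d - L) * G d + L * (G d - M))"
      by (simp add: fls_vanishes_below_add)
    then show "fls_vanishes_below N (F d * G d - L * M)" by (simp add: algebra_simps)
  qed
qed

lemma fls_tendsto_Cauchy:
  fixes F :: "int \<Rightarrow> 'a::ab_group_add fls"
  assumes bounded: "\<And>d. fls_vanishes_below 0 (F d)"
    and Cauchy: "\<And>k n. fls_vanishes_below (int k) (F (int (k + n)) - F (int k))"
  shows "fls_tendsto F (THE L. fls_tendsto F L)"
proof -
  define L where "L = Abs_fls (\<lambda>n. if n < 0 then 0 else F (n + 1) $$ n)"
  have L: "L $$ n = (if n < 0 then 0 else F (n + 1) $$ n)" for n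
    unfolding L_def by (rule nth_Abs_fls_lower_bound[of 0]) simp
  have "F d $$ n = L $$ n" if "d \<ge> max N 0" "n < N" for N d n
  proof (cases "n < 0")
    case True
    then show ?thesis using bounded[of d] by (simp add: L fls_vanishes_below_def)
  next
    case False
    then have "d = int (nat (n + 1) + nat (d - (n + 1)))" "n + 1 = int (nat (n + 1))"
      using that by auto
    then have "fls_vanishes_below (n + 1) (F d - F (n + 1))"
      by (metis Cauchy)
    then show ?thesis using False by (simp add: L fls_vanishes_below_def)
  qed
  then have "fls_tendsto F L"
    unfolding fls_tendsto_def eventually_at_top_linorder by blast
  then show ?thesis
    by (metis fls_tendsto_unique theI)
qed

lemma fls_vanishes_below_S_word: "fls_vanishes_below 0 (S_word d w :: 'a::{field,finite} fls)"
  unfolding S_word_def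
proof (intro fls_vanishes_below_sum fls_vanishes_below_prod)
  fix as :: "'a poly list" and i
  assume "as \<in> tuples_lt d (length w)" "i \<in> {..<length w}"
  then have "as ! i \<noteq> 0" by (auto simp: tuples_lt_def)
  from fls_vanishes_below_const_div_embA_power[OF this]
  show "fls_vanishes_below 0 (fls_const (snd (w ! i) ^ degree (as ! i)) / embA (as ! i) ^ fst (w ! i))"
    by (rule fls_vanishes_below_mono) simp
qed

lemma fls_vanishes_below_S_deg:
  assumes "fst x \<ge> 1"
  shows "fls_vanishes_below (int k) (S_deg k x :: 'a::{field,finite} fls)"
  unfolding S_deg_def monic_power_sum_def sum_distrib_left
proof (intro fls_vanishes_below_sum)
  fix a :: "'a poly" assume "a \<in> monics k"
  then have "a \<noteq> 0" "degree a = k" by (auto simp: monics_def)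
  have "int k \<le> int (degree a * fst x)" using assms \<open>degree a = k\<close> by (simp del: of_nat_mult)
  with fls_vanishes_below_const_div_embA_power[OF \<open>a \<noteq> 0\<close>, of "fst x" "snd x ^ k"]
  show "fls_vanishes_below (int k) (fls_const (snd x ^ k) * (1 / embA a ^ fst x))"
    by (auto intro: fls_vanishes_below_mono)
qed

lemma fls_vanishes_below_S_word_diff:
  assumes "valid_word w"
  shows "fls_vanishes_below (int k) (S_word (int (k + n)) w - S_word (int k) w :: 'a::{field,finite} fls)"
proof (induction n)
  case (Suc n)
  have "fls_vanishes_below (int (k + n)) (S_word (int (Suc (k + n))) w - S_word (int (k + n)) w :: 'a fls)"
  proof (cases w)
    case (Cons x w')
    then have "fls_vanishes_below (int (k + n) + 0) (S_deg (k + n) x * S_word (int (k + n)) w' :: 'a fls)"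
      using assms by (intro fls_vanishes_below_mult fls_vanishes_below_S_deg fls_vanishes_below_S_word) auto
    then show ?thesis by (simp add: Cons S_word_Cons_Suc del: of_nat_Suc)
  qed simp
  then have "fls_vanishes_below (int k) (S_word (int (Suc (k + n))) w - S_word (int (k + n)) w :: 'a fls)"
    by (rule fls_vanishes_below_mono) simp
  from fls_vanishes_below_add[OF this Suc.IH] show ?case by simp
qed simp

lemma zeta_word_tendsto:
  "valid_word w \<Longrightarrow> fls_tendsto (\<lambda>d. S_word d w) (zeta_word w :: 'a::{field,finite} fls)"
  unfolding zeta_word_def
  by (intro fls_tendsto_Cauchy fls_vanishes_below_S_word fls_vanishes_below_S_word_diff)

lemma fls_vanishes_below_S_lt: "fls_vanishes_below 0 (S_lt d f :: 'a::{field,finite} fls)"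
  unfolding S_lt_def
  using fls_vanishes_below_mult[OF fls_vanishes_below_const fls_vanishes_below_S_word]
  by (intro fls_vanishes_below_sum) simp

lemma zeta_A_tendsto:
  assumes "finite (supp f)" "\<And>w. w \<in> supp f \<Longrightarrow> valid_word w"
  shows "fls_tendsto (\<lambda>d. S_lt d f) (zeta_A f)"
  unfolding S_lt_def zeta_A_def using assms
  by (intro fls_tendsto_sum fls_tendsto_mult fls_tendsto_const zeta_word_tendsto
      fls_vanishes_below_S_word fls_vanishes_below_const) auto

lemma in_D_shuffle:
  assumes "in_D a" "in_D b"
  shows "in_D (shuffle a b)"
  unfolding in_D_def
proof
  show "finite (supp (shuffle a b))"
    using assms unfolding shuffle_def in_D_def by (intro finite_supp_lin_ext finite_supp_shuffle_word) auto
  show "\<forall>w. shuffle a b w \<noteq> 0 \<longrightarrow> valid_word w"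
    using assms unfolding shuffle_def in_D_def by (auto dest!: lin_ext_nonzeroD shuffle_word_nonzeroD)
qed

lemma zeta_A_shuffle:
  assumes "in_D a" "in_D b"
  shows "zeta_A (shuffle a b) = zeta_A a * zeta_A b"
proof (rule fls_tendsto_unique)
  have tendsto: "fls_tendsto (\<lambda>d. S_lt d f) (zeta_A f)" if "in_D f" for f :: "'a word \<Rightarrow> 'a"
    using that unfolding in_D_def by (intro zeta_A_tendsto) auto
  show "fls_tendsto (\<lambda>d. S_lt d (shuffle a b)) (zeta_A (shuffle a b))"
    using assms by (intro tendsto in_D_shuffle)
  show "fls_tendsto (\<lambda>d. S_lt d (shuffle a b)) (zeta_A a * zeta_A b)"
    unfolding S_lt_shuffle[OF assms]
    using assms by (intro fls_tendsto_mult tendsto fls_vanishes_below_S_lt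
        fls_tendsto_vanishes_below_0[OF tendsto])
qed

theorem theorem5p11:
  fixes a b :: "'a::{field,finite} word \<Rightarrow> 'a" and d :: int
  assumes "in_D a" and "in_D b"
  shows "S_lt d (shuffle a b) = S_lt d a * S_lt d b
         \<and> zeta_A (shuffle a b) = zeta_A a * zeta_A b"
  using S_lt_shuffle[OF assms] zeta_A_shuffle[OF assms] by blast

end
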